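(* Let $h\in\mathbb{R}[T]$. Then $K_h\in\Lambda'$, $\det K_h=1$, and $K_h\cdot{}^{\gamma}\!\left(K_h\right)^{-1}=M_h$. Consequently, on the open $\mathbb{C}^*$-stable subset $U=Y\setminus V(ab)$ (which is preserved by every $\mu_h$), one has $\mu_h|_U=\psi'_h\circ\mu_0|_U\circ(\psi'_h)^{-1}$; in particular all the restrictions $\mu_h|_U$, $h\in\mathbb{R}[T]$, are equivalent real circle forms on $U$ (equivalence via $\mathbb{C}^*$-equivariant automorphisms of $U$).
   Context: For $k\ge1$, $W_k=\mathbb{C}^2$ is the $\mathbb{C}^*$-module with weights $(k,-k)$. Fix $m\ge1$, $n=2m+1$, and $Y=W_2\times W_n$ with coordinates $(a,b,x,y)$, $t\cdot(a,b,x,y)=(t^2a,t^{-2}b,t^nx,t^{-n}y)$; $\sigma(t)=\overline{t}^{-1}$; a real circle form is an antiholomorphic involution $\mu$ with $\mu(t\cdot p)=\sigma(t)\cdot\mu(p)$. Let $\mu_0(a,b,x,y)=(\overline{b},\overline{a},\overline{y},\overline{x})$, $T=ab$. Let $\Lambda'$ be the group of matrices $M=\begin{pmatrix}P(T)& a^nQ(T)\\ b^nS(T)& R(T)\end{pmatrix}$ with $P,Q,R,S\in\mathbb{C}[T,T^{-1}]$ and $\det M=cT^k$, $c\in\mathbb{C}^*$, $k\in\mathbb{Z}$; for such $M$ define ${}^{\gamma}M=\begin{pmatrix}\overline{R}(T)& a^n\overline{S}(T)\\ b^n\overline{Q}(T)& \overline{P}(T)\end{pmatrix}$, where the bar conjugates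 coefficients. For $h\in\mathbb{R}[T]$ (with $h=h(ab)$): $M_h=\begin{pmatrix}1-Th^2 & a^nh^n\\ -b^nh^n & \sum_{j=0}^{n-1}(Th^2)^j\end{pmatrix}$, $\varphi_h(a,b,x,y)=(a,b,M_h\binom{x}{y})$, $\mu_h=\varphi_h\circ\mu_0$, and $$K_h=\begin{pmatrix}1 & a^n\dfrac{h}{T^m}\\[2mm] b^n\dfrac{h\sum_{j=0}^{m-1}(Th^2)^j}{T^m} & \sum_{j=0}^{m}(Th^2)^j\end{pmatrix},$$ with $\psi'_h$ the automorphism of $U$ given by $\psi'_h(a,b,x,y)=(a,b,K_h\binom{x}{y})$. *)

theory Defs
  imports "HOL-Analysis.Analysis" "HOL-Computational_Algebra.Polynomial"
begin

text \<open>Points of Y = W_2 x W_n are quadruples (a,b,x,y).\<close>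
type_synonym pt = "complex \<times> complex \<times> complex \<times> complex"

definition act :: "nat \<Rightarrow> complex \<Rightarrow> pt \<Rightarrow> pt" where
  "act n t p = (case p of (a,b,x,y) \<Rightarrow>
     (t^2 * a, inverse t ^ 2 * b, t^n * x, inverse t ^ n * y))"

definition sigma :: "complex \<Rightarrow> complex" where
  "sigma t = inverse (cnj t)"

definition U :: "pt set" where
  "U = {(a,b,x,y). a * b \<noteq> 0}"

definition mat2 :: "complex \<Rightarrow> complex \<Rightarrow> complex \<Rightarrow> complex \<Rightarrow> complex^2^2" where
  "mat2 p q s r = (\<chi> i j. if i = 1 then (if j = 1 then p else q) else (if j = 1 then s else r))"

definition vec2 :: "complex \<Rightarrow> complex \<Rightarrow> complex^2" where
  "vec2 x y = (\<chi> i. if i = 1 then x else y)"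

definition apply_mat :: "(complex \<Rightarrow> complex \<Rightarrow> complex^2^2) \<Rightarrow> pt \<Rightarrow> pt" where
  "apply_mat M p = (case p of (a,b,x,y) \<Rightarrow>
     (let v = M a b *v vec2 x y in (a, b, v $ 1, v $ 2)))"

text \<open>Laurent polynomials in T: a pair (p,k) stands for p(T)/T^k.\<close>
type_synonym laurent = "complex poly \<times> nat"

definition leval :: "laurent \<Rightarrow> complex \<Rightarrow> complex" where
  "leval L t = poly (fst L) t / t ^ snd L"

definition lconj :: "laurent \<Rightarrow> laurent" where
  "lconj L = (map_poly cnj (fst L), snd L)"

text \<open>A quadruple (P,Q,S,R) of Laurent polynomials represents the matrix
  [[P(T), a^n Q(T)], [b^n S(T), R(T)]] with T = ab.\<close>
type_synonym quad = "laurent \<times> laurent \<times> laurent \<times> laurent"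

definition Lmat :: "nat \<Rightarrow> quad \<Rightarrow> complex \<Rightarrow> complex \<Rightarrow> complex^2^2" where
  "Lmat n M a b = (case M of (P,Q,S,R) \<Rightarrow>
     mat2 (leval P (a*b)) (a^n * leval Q (a*b)) (b^n * leval S (a*b)) (leval R (a*b)))"

text \<open>Membership in the group Lambda': det M = c T^k, c nonzero, k integer
  (identity of Laurent polynomials, checked on T = ab nonzero).\<close>
definition in_Lambda' :: "nat \<Rightarrow> quad \<Rightarrow> bool" where
  "in_Lambda' n M \<longleftrightarrow> (\<exists>c k. c \<noteq> 0 \<and>
     (\<forall>a b. a * b \<noteq> 0 \<longrightarrow> det (Lmat n M a b) = c * (a*b) powi k))"

definition gammaq :: "quad \<Rightarrow> quad" where
  "gammaq M = (case M of (P,Q,S,R) \<Rightarrow> (lconj R, lconj S, lconj Q, lconj P))"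

definition hc :: "real poly \<Rightarrow> complex poly" where
  "hc h = map_poly complex_of_real h"

definition Tpoly :: "complex poly" where "Tpoly = [:0, 1:]"

text \<open>K_h as a quadruple of Laurent polynomials (m with n = 2m+1).\<close>
definition Kq :: "nat \<Rightarrow> real poly \<Rightarrow> quad" where
  "Kq m h = ((1, 0),
             (hc h, m),
             (hc h * (\<Sum>j<m. (Tpoly * hc h ^ 2) ^ j), m),
             ((\<Sum>j\<le>m. (Tpoly * hc h ^ 2) ^ j), 0))"

definition Mh :: "nat \<Rightarrow> real poly \<Rightarrow> complex \<Rightarrow> complex \<Rightarrow> complex^2^2" where
  "Mh n h a b = (let T = a*b; hv = poly (hc h) T in
     mat2 (1 - T * hv^2) (a^n * hv^n) (- (b^n * hv^n)) (\<Sum>j<n. (T * hv^2)^j))"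

definition mu0 :: "pt \<Rightarrow> pt" where
  "mu0 p = (case p of (a,b,x,y) \<Rightarrow> (cnj b, cnj a, cnj y, cnj x))"

definition phi :: "nat \<Rightarrow> real poly \<Rightarrow> pt \<Rightarrow> pt" where
  "phi n h = apply_mat (Mh n h)"

definition mu :: "nat \<Rightarrow> real poly \<Rightarrow> pt \<Rightarrow> pt" where
  "mu n h = phi n h \<circ> mu0"

definition psi' :: "nat \<Rightarrow> real poly \<Rightarrow> pt \<Rightarrow> pt" where
  "psi' m h = apply_mat (Lmat (2*m+1) (Kq m h))"

definition equivariant_on :: "nat \<Rightarrow> pt set \<Rightarrow> (pt \<Rightarrow> pt) \<Rightarrow> bool" where
  "equivariant_on n S f \<longleftrightarrow> (\<forall>t p. t \<noteq> 0 \<longrightarrow> p \<in> S \<longrightarrow> f (act n t p) = act n t (f p))"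

end

theory Submission
  imports Defs
begin

text \<open>The conjugation \<open>\<mu>\<^sub>0\<close> swaps \<open>a, b\<close> and \<open>x, y\<close>, so it intertwines the automorphism
  given by a matrix \<open>K \<in> \<Lambda>'\<close> with the one given by \<open>\<gamma>(K)\<close>. Hence a form \<open>\<mu> = M \<circ> \<mu>\<^sub>0\<close>
  with \<open>M = K \<gamma>(K)\<inverse>\<close> is the conjugate \<open>K \<circ> \<mu>\<^sub>0 \<circ> K\<inverse>\<close> of \<open>\<mu>\<^sub>0\<close>. For \<open>K = K\<^sub>h\<close>,
  write \<open>u = T h\<^sup>2\<close>, \<open>A = \<Sum>j<m. u^j\<close> and \<open>R = \<Sum>j\<le>m. u^j\<close>: the relations
  \<open>R - u A = 1\<close>, \<open>R - A = u^m\<close> and \<open>R\<^sup>2 - u A\<^sup>2 = \<Sum>j<n. u^j\<close> between these geometric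
  sums give \<open>det K\<^sub>h = 1\<close> and \<open>K\<^sub>h \<gamma>(K\<^sub>h)\<inverse> = M\<^sub>h\<close>, the odd exponent \<open>n = 2m + 1\<close>
  making the powers of \<open>T\<close> cancel. Being all conjugate to \<open>\<mu>\<^sub>0\<close>, the forms \<open>\<mu>\<^sub>h\<close> are
  conjugate to each other.\<close>

lemma mat2_nth [simp]:
  "mat2 p q s r $ 1 $ 1 = p" "mat2 p q s r $ 1 $ 2 = q"
  "mat2 p q s r $ 2 $ 1 = s" "mat2 p q s r $ 2 $ 2 = r"
  by (simp_all add: mat2_def)

lemma vec2_nth [simp]: "vec2 x y $ 1 = x" "vec2 x y $ 2 = y"
  by (simp_all add: vec2_def)

lemma mat2_eq_iff: "mat2 p q s r = mat2 p' q' s' r' \<longleftrightarrow> p = p' \<and> q = q' \<and> s = s' \<and> r = r'"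
  by (auto simp: vec_eq_iff forall_2 mat2_def)

lemma mat2_mult:
  "mat2 p q s r ** mat2 p' q' s' r'
    = mat2 (p * p' + q * s') (p * q' + q * r') (s * p' + r * s') (s * q' + r * r')"
  by (simp add: vec_eq_iff forall_2 matrix_matrix_mult_def sum_2)

lemma mat_1_eq_mat2: "(mat 1 :: complex^2^2) = mat2 1 0 0 1"
  by (simp add: vec_eq_iff forall_2 mat_def)

lemma det_mat2: "det (mat2 p q s r) = p*r - q * s"
  by (simp add: det_2)

lemma mat2_mult_vec2: "mat2 p q s r *v vec2 x y = vec2 (p*x + q*y) (s*x + r*y)"
  by (simp add: vec_eq_iff forall_2 matrix_vector_mult_def sum_2)

lemma matrix_inv_inverse:
  fixes A :: "'a::semiring_1^'n^'m"
  assumes "invertible A"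
  shows "A ** matrix_inv A = mat 1" "matrix_inv A ** A = mat 1"
  using someI_ex[OF assms[unfolded invertible_def]] unfolding matrix_inv_def by simp_all

lemma matrix_inv_unique:
  fixes A :: "'a::semiring_1^'n^'m"
  assumes AB: "A ** B = mat 1" and BA: "B ** A = mat 1"
  shows "matrix_inv A = B"
proof -
  have inv: "invertible A"
    unfolding invertible_def using AB BA by blast
  have "matrix_inv A = matrix_inv A ** (A ** B)"
    using AB by simp
  also have "\<dots> = (matrix_inv A ** A) ** B"
    by (rule matrix_mul_assoc)
  also have "\<dots> = B"
    using matrix_inv_inverse(2)[OF inv] by simp
  finally show ?thesis .
qed

lemma matrix_inv_mat2:
  assumes "p*r - q * s = 1"
  shows "matrix_inv (mat2 p q s r) = mat2 r (-q) (-s) p"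
  using assms by (intro matrix_inv_unique)
    (simp_all add: mat2_mult mat_1_eq_mat2 mat2_eq_iff algebra_simps)

definition gamma_conj :: "complex^2^2 \<Rightarrow> complex^2^2" where
  "gamma_conj X = mat2 (cnj (X$2$2)) (cnj (X$2$1)) (cnj (X$1$2)) (cnj (X$1$1))"

lemma apply_mat_Pair:
  "apply_mat M (a, b, x, y) = (a, b, (M a b *v vec2 x y) $ 1, (M a b *v vec2 x y) $ 2)"
  by (simp add: apply_mat_def Let_def)

lemma vec2_nth_eta: "vec2 (v $ 1) (v $ 2) = v"
  by (simp add: vec_eq_iff forall_2)

lemma apply_mat_apply_mat:
  "apply_mat M (apply_mat N p) = apply_mat (\<lambda>a b. M a b ** N a b) p"
  by (cases p) (simp add: apply_mat_Pair vec2_nth_eta matrix_vector_mul_assoc)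

lemma apply_mat_mat_1:
  assumes "M (fst p) (fst (snd p)) = mat 1"
  shows "apply_mat M p = p"
  using assms by (cases p) (simp add: apply_mat_Pair)

lemma apply_mat_cong_U:
  assumes "\<And>a b. a * b \<noteq> 0 \<Longrightarrow> M a b = N a b" and "p \<in> U"
  shows "apply_mat M p = apply_mat N p"
  using assms by (cases p) (simp add: apply_mat_Pair U_def)

lemma mem_U_iff: "(a, b, x, y) \<in> U \<longleftrightarrow> a * b \<noteq> 0"
  by (simp add: U_def)

lemma apply_mat_in_U: "p \<in> U \<Longrightarrow> apply_mat M p \<in> U"
  by (cases p) (simp add: apply_mat_Pair mem_U_iff)

lemma mu0_in_U: "p \<in> U \<Longrightarrow> mu0 p \<in> U"
  by (cases p) (simp add: mu0_def mem_U_iff)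

lemma mu_image_U: "mu n h ` U \<subseteq> U"
  by (auto simp: mu_def phi_def intro!: apply_mat_in_U mu0_in_U)

lemma act_in_U: "t \<noteq> 0 \<Longrightarrow> p \<in> U \<Longrightarrow> act n t p \<in> U"
  by (cases p) (simp add: act_def mem_U_iff)

lemma
  assumes "\<And>a b. a * b \<noteq> 0 \<Longrightarrow> det (N a b) \<noteq> 0" and "p \<in> U"
  shows apply_mat_inv_apply_mat: "apply_mat (\<lambda>a b. matrix_inv (N a b)) (apply_mat N p) = p"
    and apply_mat_apply_mat_inv: "apply_mat N (apply_mat (\<lambda>a b. matrix_inv (N a b)) p) = p"
proof -
  obtain a b x y where p: "p = (a, b, x, y)"
    by (cases p)
  then have "invertible (N a b)"
    using assms by (simp add: mem_U_iff invertible_det_nz)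
  then show "apply_mat (\<lambda>a b. matrix_inv (N a b)) (apply_mat N p) = p"
    and "apply_mat N (apply_mat (\<lambda>a b. matrix_inv (N a b)) p) = p"
    by (simp_all add: p apply_mat_apply_mat apply_mat_mat_1 matrix_inv_inverse)
qed

lemma
  assumes "\<And>a b. a * b \<noteq> 0 \<Longrightarrow> det (N a b) \<noteq> 0"
  shows bij_betw_apply_mat: "bij_betw (apply_mat N) U U"
    and the_inv_into_apply_mat:
      "p \<in> U \<Longrightarrow> the_inv_into U (apply_mat N) p = apply_mat (\<lambda>a b. matrix_inv (N a b)) p"
proof -
  show bij: "bij_betw (apply_mat N) U U"
    by (rule bij_betw_byWitness[where f' = "apply_mat (\<lambda>a b. matrix_inv (N a b))"])
      (use apply_mat_inv_apply_mat[where N = N, OF assms]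
        apply_mat_apply_mat_inv[where N = N, OF assms] apply_mat_in_U in blast)+
  show "the_inv_into U (apply_mat N) p = apply_mat (\<lambda>a b. matrix_inv (N a b)) p" if "p \<in> U"
    by (rule the_inv_into_f_eq[OF bij_betw_imp_inj_on[OF bij]])
      (use that apply_mat_apply_mat_inv[where N = N, OF assms] apply_mat_in_U in auto)
qed

lemma equivariant_on_apply_Lmat: "equivariant_on n S (apply_mat (Lmat n M))"
  unfolding equivariant_on_def
proof (intro allI impI)
  fix t :: complex and p :: pt
  assume "t \<noteq> 0"
  obtain a b x y where p: "p = (a, b, x, y)"
    by (cases p)
  have "t^2 * a * (inverse t ^ 2 * b) = a * b"
    using \<open>t \<noteq> 0\<close> by (simp add: field_simps)
  with \<open>t \<noteq> 0\<close> show "apply_mat (Lmat n M) (act n t p) = act n t (apply_mat (Lmat n M) p)"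
    by (cases M) (simp add: p act_def apply_mat_Pair Lmat_def mat2_mult_vec2 field_simps
        power_mult_distrib mult_2_right power_add flip: power_mult)
qed

lemma equivariant_on_comp:
  assumes "equivariant_on n S f" "equivariant_on n S g" "g ` S \<subseteq> S"
  shows "equivariant_on n S (f \<circ> g)"
  using assms unfolding equivariant_on_def image_subset_iff by (metis comp_apply)

lemma equivariant_on_the_inv_into:
  assumes bij: "bij_betw f S S" and f: "equivariant_on n S f"
    and act_S: "\<And>t p. t \<noteq> 0 \<Longrightarrow> p \<in> S \<Longrightarrow> act n t p \<in> S"
  shows "equivariant_on n S (the_inv_into S f)"
  unfolding equivariant_on_def
proof (intro allI impI)
  fix t :: complex and p :: pt
  assume "t \<noteq> 0" "p \<in> S"
  let ?q = "the_inv_into S f p"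
  have q: "?q \<in> S" "f ?q = p"
    using bij_betwE[OF bij_betw_the_inv_into[OF bij]] f_the_inv_into_f_bij_betw[OF bij]
      \<open>p \<in> S\<close> by blast+
  then have "f (act n t ?q) = act n t p"
    using f \<open>t \<noteq> 0\<close> unfolding equivariant_on_def by metis
  then show "the_inv_into S f (act n t p) = act n t ?q"
    using bij q \<open>t \<noteq> 0\<close> act_S by (intro the_inv_into_f_eq) (auto simp: bij_betw_def)
qed

lemma det_gamma_conj: "det (gamma_conj X) = cnj (det X)"
  by (simp add: gamma_conj_def det_2 mult.commute)

lemma mu0_apply_mat:
  "mu0 (apply_mat N p) = apply_mat (\<lambda>a b. gamma_conj (N (cnj b) (cnj a))) (mu0 p)"
  by (cases p) (simp add: mu0_def apply_mat_Pair gamma_conj_def mat2_mult_vec2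
      matrix_vector_mult_def sum_2 mult.commute)

lemma Lmat_gammaq: "Lmat n (gammaq M) a b = gamma_conj (Lmat n M (cnj b) (cnj a))"
  by (cases M) (simp add: Lmat_def gammaq_def gamma_conj_def lconj_def leval_def mult.commute)

lemma mu0_apply_Lmat: "mu0 (apply_mat (Lmat n M) p) = apply_mat (Lmat n (gammaq M)) (mu0 p)"
proof -
  have "(\<lambda>a b. gamma_conj (Lmat n M (cnj b) (cnj a))) = Lmat n (gammaq M)"
    by (simp add: fun_eq_iff Lmat_gammaq)
  then show ?thesis
    by (simp add: mu0_apply_mat)
qed

lemma apply_mat_conjugates_mu0:
  assumes det: "\<And>a b. a * b \<noteq> 0 \<Longrightarrow> det (Lmat n M a b) \<noteq> 0" and "p \<in> U"
  shows "apply_mat (\<lambda>a b. Lmat n M a b ** matrix_inv (Lmat n (gammaq M) a b)) (mu0 p)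
    = (apply_mat (Lmat n M) \<circ> mu0 \<circ> the_inv_into U (apply_mat (Lmat n M))) p"
proof -
  let ?K = "Lmat n M" and ?G = "Lmat n (gammaq M)"
  let ?K' = "\<lambda>a b. matrix_inv (?K a b)" and ?G' = "\<lambda>a b. matrix_inv (?G a b)"
  have det_G: "det (?G a b) \<noteq> 0" if "a * b \<noteq> 0" for a b
    using det[of "cnj b" "cnj a"] that by (simp add: Lmat_gammaq det_gamma_conj)
  define q where "q = apply_mat ?K' p"
  have q: "q \<in> U" "apply_mat ?K q = p"
    using \<open>p \<in> U\<close> apply_mat_apply_mat_inv[where N = ?K, OF det]
    by (simp_all add: q_def apply_mat_in_U)
  have "apply_mat (\<lambda>a b. ?K a b ** ?G' a b) (mu0 p)
      = apply_mat ?K (apply_mat ?G' (mu0 (apply_mat ?K q)))"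
    by (simp add: q apply_mat_apply_mat)
  also have "\<dots> = apply_mat ?K (apply_mat ?G' (apply_mat ?G (mu0 q)))"
    by (simp add: mu0_apply_Lmat)
  also have "\<dots> = apply_mat ?K (mu0 q)"
    using apply_mat_inv_apply_mat[where N = ?G, OF det_G] mu0_in_U[OF \<open>q \<in> U\<close>] by simp
  also have "\<dots> = (apply_mat ?K \<circ> mu0 \<circ> the_inv_into U (apply_mat ?K)) p"
    using the_inv_into_apply_mat[where N = ?K, OF det \<open>p \<in> U\<close>] by (simp add: q_def)
  finally show ?thesis .
qed

lemma geometric_sum_atMost_cons:
  fixes u :: "'a::comm_ring_1"
  shows "(\<Sum>j\<le>m. u^j) = 1 + u * (\<Sum>j<m. u^j)"
  by (induction m) (simp_all add: algebra_simps)

lemma geometric_sum_atMost_snoc: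
  fixes u :: "'a::comm_ring_1"
  shows "(\<Sum>j\<le>m. u^j) = (\<Sum>j<m. u^j) + u^m"
  by (simp flip: lessThan_Suc_atMost)

lemma geometric_sum_odd_split:
  fixes u :: "'a::comm_ring_1"
  shows "(\<Sum>j<2*m+1. u^j) = (\<Sum>j<m. u^j) + u^m * (\<Sum>j\<le>m. u^j)"
proof -
  have "(\<Sum>j<2*m+1. u^j) = (\<Sum>j\<in>{0..<m}. u^j) + (\<Sum>j\<in>{0+m..<(m+1)+m}. u^j)"
    by (simp add: lessThan_atLeast0 sum.atLeastLessThan_concat mult_2)
  also have "(\<Sum>j\<in>{0+m..<(m+1)+m}. u^j) = u^m * (\<Sum>j\<le>m. u^j)"
    by (simp only: sum.shift_bounds_nat_ivl) (simp add: sum_distrib_left power_add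
        atLeast0LessThan lessThan_Suc_atMost mult.commute)
  finally show ?thesis
    by (simp add: atLeast0LessThan)
qed

lemma geometric_sum_square_identity:
  fixes u :: "'a::comm_ring_1"
  shows "(\<Sum>j\<le>m. u^j)^2 - u * (\<Sum>j<m. u^j)^2 = (\<Sum>j<2*m+1. u^j)"
proof -
  define A where "A = (\<Sum>j<m. u^j)"
  define R where "R = (\<Sum>j\<le>m. u^j)"
  have "R^2 - u * A^2 = A * (R - u * A) + u^m * R"
    by (simp add: power2_eq_square R_def geometric_sum_atMost_snoc flip: A_def)
      (simp add: algebra_simps)
  also have "\<dots> = A + u^m * R"
    by (simp add: R_def geometric_sum_atMost_cons flip: A_def)
  finally show ?thesis
    unfolding A_def R_def geometric_sum_odd_split .
qed

lemma poly_hc_cnj: "poly (hc h) (cnj z) = cnj (poly (hc h) z)"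
  by (rule poly_cnj_real[symmetric]) (simp add: hc_def coeff_map_poly)

lemma Lmat_Kq:
  fixes a b :: complex and h :: "real poly" and m :: nat
  defines "T \<equiv> a * b"
  defines "H \<equiv> poly (hc h) T"
  defines "A \<equiv> \<Sum>j<m. (T * H^2)^j" and "R \<equiv> \<Sum>j\<le>m. (T * H^2)^j"
  shows "Lmat (2*m+1) (Kq m h) a b = mat2 1 (a^(2*m+1) * (H / T^m)) (b^(2*m+1) * (H * A / T^m)) R"
  by (simp add: Lmat_def Kq_def leval_def poly_sum Tpoly_def T_def H_def A_def R_def)

lemma Lmat_gammaq_Kq:
  fixes a b :: complex and h :: "real poly" and m :: nat
  defines "T \<equiv> a * b"
  defines "H \<equiv> poly (hc h) T"
  defines "A \<equiv> \<Sum>j<m. (T * H^2)^j" and "R \<equiv> \<Sum>j\<le>m. (T * H^2)^j"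
  shows "Lmat (2*m+1) (gammaq (Kq m h)) a b
    = mat2 R (a^(2*m+1) * (H * A / T^m)) (b^(2*m+1) * (H / T^m)) 1"
proof -
  have "poly (hc h) (cnj b * cnj a) = cnj (poly (hc h) (a * b))"
    using poly_hc_cnj[of h "a * b"] by (simp add: mult.commute)
  then show ?thesis
    unfolding Lmat_gammaq Lmat_Kq
    by (simp add: gamma_conj_def T_def H_def A_def R_def mult.commute[of b a])
qed

lemma odd_powers_cancel:
  fixes a b X Y :: complex
  assumes "a * b \<noteq> 0"
  shows "a^(2*m+1) * (X / (a*b)^m) * (b^(2*m+1) * (Y / (a*b)^m)) = a * b * X * Y"
proof -
  have "a^(2*m+1) * (X / (a*b)^m) * (b^(2*m+1) * (Y / (a*b)^m))
      = (a*b)^(2*m+1) * X * Y / ((a*b)^m * (a*b)^m)"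
    by (simp add: power_mult_distrib)
  also have "(a*b)^(2*m+1) = (a*b)^m * (a*b)^m * (a*b)"
    by (simp add: power_add mult_2)
  finally show ?thesis
    using assms by simp
qed

lemma det_Lmat_Kq:
  assumes "a * b \<noteq> 0"
  shows "det (Lmat (2*m+1) (Kq m h) a b) = 1"
proof -
  define T H where "T = a * b" and "H = poly (hc h) T"
  have "det (Lmat (2*m+1) (Kq m h) a b) = (\<Sum>j\<le>m. (T*H^2)^j) - T * H^2 * (\<Sum>j<m. (T*H^2)^j)"
    using odd_powers_cancel[OF assms, of m H "H * (\<Sum>j<m. (T*H^2)^j)"]
    unfolding Lmat_Kq det_mat2 by (simp add: power2_eq_square T_def H_def ac_simps)
  then show ?thesis
    by (simp add: geometric_sum_atMost_cons)
qed

lemma det_Lmat_gammaq_Kq: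
  assumes "a * b \<noteq> 0"
  shows "det (Lmat (2*m+1) (gammaq (Kq m h)) a b) = 1"
  using det_Lmat_Kq[of "cnj b" "cnj a"] assms by (simp add: Lmat_gammaq det_gamma_conj)

lemma Lmat_Kq_mult_inv_gammaq:
  assumes "a * b \<noteq> 0"
  shows "Lmat (2*m+1) (Kq m h) a b ** matrix_inv (Lmat (2*m+1) (gammaq (Kq m h)) a b)
    = Mh (2*m+1) h a b"
proof -
  define T H where "T = a * b" and "H = poly (hc h) T"
  define u A R where "u = T * H^2" and "A = (\<Sum>j<m. u^j)" and "R = (\<Sum>j\<le>m. u^j)"
  define x y where "x = a^(2*m+1) * (H / T^m)" and "y = b^(2*m+1) * (H / T^m)"
  have K: "Lmat (2*m+1) (Kq m h) a b = mat2 1 x (y * A) R"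
    unfolding Lmat_Kq by (simp add: x_def y_def A_def R_def u_def T_def H_def mult.assoc)
  have G: "Lmat (2*m+1) (gammaq (Kq m h)) a b = mat2 R (x * A) y 1"
    unfolding Lmat_gammaq_Kq by (simp add: x_def y_def A_def R_def u_def T_def H_def mult.assoc)
  have "det (mat2 R (x * A) y 1) = 1"
    using det_Lmat_gammaq_Kq[where m = m and h = h, OF assms] by (simp only: G)
  then have G_inv: "matrix_inv (Lmat (2*m+1) (gammaq (Kq m h)) a b) = mat2 1 (- (x * A)) (- y) R"
    unfolding G det_mat2 by (simp add: matrix_inv_mat2)
  have xy: "x * y = u"
    using odd_powers_cancel[OF assms, of m H H]
    by (simp add: x_def y_def u_def T_def power2_eq_square)
  have "T \<noteq> 0"
    using assms by (simp add: T_def)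
  then have x_u: "x * u^m = a^(2*m+1) * H^(2*m+1)" and y_u: "y * u^m = b^(2*m+1) * H^(2*m+1)"
    by (simp_all add: x_def y_def u_def power_mult_distrib power_add flip: power_mult)
  have "R - A = u^m"
    by (simp add: A_def R_def geometric_sum_atMost_snoc)
  have "R^2 - u * A^2 = (\<Sum>j<2*m+1. u^j)"
    unfolding A_def R_def by (rule geometric_sum_square_identity)
  have "mat2 1 x (y * A) R ** mat2 1 (- (x * A)) (- y) R
      = mat2 (1 - u) (a^(2*m+1) * H^(2*m+1)) (- (b^(2*m+1) * H^(2*m+1))) (\<Sum>j<2*m+1. u^j)"
    unfolding mat2_mult mat2_eq_iff
  proof (intro conjI)
    show "1 * 1 + x * - y = 1 - u"
      using xy by simp
    show "1 * - (x * A) + x * R = a^(2*m+1) * H^(2*m+1)"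
      using \<open>R - A = u^m\<close> x_u by (simp add: algebra_simps flip: right_diff_distrib)
    show "y * A * 1 + R * - y = - (b^(2*m+1) * H^(2*m+1))"
      using \<open>R - A = u^m\<close> y_u by (simp add: algebra_simps flip: right_diff_distrib)
    show "y * A * - (x * A) + R * R = (\<Sum>j<2*m+1. u^j)"
      using \<open>R^2 - u * A^2 = _\<close> xy by (simp add: algebra_simps power2_eq_square)
  qed
  also have "\<dots> = Mh (2*m+1) h a b"
    by (simp add: Mh_def Let_def u_def T_def H_def)
  finally show ?thesis
    by (simp only: K G_inv)
qed

lemma psi'_bij_betw: "bij_betw (psi' m h) U U"
  unfolding psi'_def by (rule bij_betw_apply_mat) (metis det_Lmat_Kq one_neq_zero)

lemma psi'_equivariant_on: "equivariant_on (2*m+1) U (psi' m h)"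
  unfolding psi'_def by (rule equivariant_on_apply_Lmat)

lemma mu_conjugate_mu0:
  assumes "p \<in> U"
  shows "mu (2*m+1) h p = (psi' m h \<circ> mu0 \<circ> the_inv_into U (psi' m h)) p"
proof -
  have "mu (2*m+1) h p = apply_mat (Mh (2*m+1) h) (mu0 p)"
    by (simp add: mu_def phi_def)
  also have "\<dots> = apply_mat (\<lambda>a b. Lmat (2*m+1) (Kq m h) a b
      ** matrix_inv (Lmat (2*m+1) (gammaq (Kq m h)) a b)) (mu0 p)"
    using mu0_in_U[OF assms] by (intro apply_mat_cong_U Lmat_Kq_mult_inv_gammaq[symmetric])
  also have "\<dots> = (psi' m h \<circ> mu0 \<circ> the_inv_into U (psi' m h)) p"
    unfolding psi'_def using assms det_Lmat_Kq by (intro apply_mat_conjugates_mu0) auto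
  finally show ?thesis .
qed

lemma conjugate_by_bij_trans:
  assumes f: "bij_betw f S S" and g: "bij_betw g S S" and "m ` S \<subseteq> S"
    and F: "\<forall>p\<in>S. F p = (f \<circ> m \<circ> the_inv_into S f) p"
    and G: "\<forall>p\<in>S. G p = (g \<circ> m \<circ> the_inv_into S g) p"
  shows "\<forall>p\<in>S. F p = ((f \<circ> the_inv_into S g) \<circ> G \<circ> the_inv_into S (f \<circ> the_inv_into S g)) p"
proof
  fix p
  assume "p \<in> S"
  let ?f' = "the_inv_into S f" and ?g' = "the_inv_into S g"
  have f': "bij_betw ?f' S S" and g': "bij_betw ?g' S S"
    using f g by (simp_all add: bij_betw_the_inv_into)
  have inv_g: "?g' (g x) = x" if "x \<in> S" for x
    using g that by (simp add: bij_betw_imp_inj_on the_inv_into_f_f)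
  have "the_inv_into S (f \<circ> ?g') p = g (?f' p)"
    using \<open>p \<in> S\<close> f g f' g' inv_g
    by (intro the_inv_into_f_eq bij_betw_imp_inj_on[OF bij_betw_trans])
      (auto simp: f_the_inv_into_f_bij_betw dest: bij_betwE)
  moreover have "?f' p \<in> S" "m (?f' p) \<in> S"
    using \<open>p \<in> S\<close> f' \<open>m ` S \<subseteq> S\<close> by (auto dest: bij_betwE)
  ultimately show "F p = ((f \<circ> ?g') \<circ> G \<circ> the_inv_into S (f \<circ> ?g')) p"
    using \<open>p \<in> S\<close> F G g by (auto simp: inv_g bij_betwE)
qed

lemma Kq_in_Lambda': "in_Lambda' (2*m+1) (Kq m h)"
  unfolding in_Lambda'_def using det_Lmat_Kq
  by (intro exI[of _ "1::complex"] exI[of _ "0::int"]) auto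

lemma mu_equivalent:
  "\<exists>\<psi>. bij_betw \<psi> U U \<and> equivariant_on (2*m+1) U \<psi>
    \<and> (\<forall>p\<in>U. mu (2*m+1) h1 p = (\<psi> \<circ> mu (2*m+1) h2 \<circ> the_inv_into U \<psi>) p)"
proof (intro exI conjI)
  let ?\<psi> = "psi' m h1 \<circ> the_inv_into U (psi' m h2)"
  have inv: "bij_betw (the_inv_into U (psi' m h2)) U U"
    by (rule bij_betw_the_inv_into[OF psi'_bij_betw])
  show "bij_betw ?\<psi> U U"
    using bij_betw_trans[OF inv psi'_bij_betw] .
  show "equivariant_on (2*m+1) U ?\<psi>"
    using inv
    by (intro equivariant_on_comp psi'_equivariant_on equivariant_on_the_inv_into psi'_bij_betw)
      (auto simp: act_in_U bij_betw_def)
  show "\<forall>p\<in>U. mu (2*m+1) h1 p = (?\<psi> \<circ> mu (2*m+1) h2 \<circ> the_inv_into U ?\<psi>) p"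
  proof (rule conjugate_by_bij_trans[OF psi'_bij_betw psi'_bij_betw])
    show "mu0 ` U \<subseteq> U"
      using mu0_in_U by blast
  qed (use mu_conjugate_mu0 in blast)+
qed

theorem lemma3p3:
  fixes m :: nat and h :: "real poly"
  assumes "m \<ge> 1"
  defines "n \<equiv> 2 * m + 1"
  shows "in_Lambda' n (Kq m h)
    \<and> (\<forall>a b. a * b \<noteq> 0 \<longrightarrow> det (Lmat n (Kq m h) a b) = 1)
    \<and> (\<forall>a b. a * b \<noteq> 0 \<longrightarrow>
          Lmat n (Kq m h) a b ** matrix_inv (Lmat n (gammaq (Kq m h)) a b) = Mh n h a b)
    \<and> mu n h ` U \<subseteq> U
    \<and> bij_betw (psi' m h) U U
    \<and> equivariant_on n U (psi' m h)
    \<and> (\<forall>p\<in>U. mu n h p = (psi' m h \<circ> mu0 \<circ> the_inv_into U (psi' m h)) p)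
    \<and> (\<forall>h1 h2 :: real poly. \<exists>\<psi>. bij_betw \<psi> U U \<and> equivariant_on n U \<psi>
          \<and> (\<forall>p\<in>U. mu n h1 p = (\<psi> \<circ> mu n h2 \<circ> the_inv_into U \<psi>) p))"
  unfolding n_def
  by (intro conjI allI impI ballI Kq_in_Lambda' det_Lmat_Kq Lmat_Kq_mult_inv_gammaq mu_image_U
      psi'_bij_betw psi'_equivariant_on mu_conjugate_mu0 mu_equivalent)

end
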